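(* Let $k\in\mathbb{N}$ with $k\ge2$, let $t_0\ge0$, and let $g_0\in C^2([t_0,\infty))$ satisfy $$\lim_{t\to\infty}tg_0'(t)=\infty,\qquad \lim_{t\to\infty}\frac{g_0''(t)}{g_0'(t)^2}=0,$$ and suppose $tg_0'(t)$ is nondecreasing and $g_0'(t)/g_0(t)$ is nonincreasing for all $t\ge t_0$. Let $f:[0,\infty)\to[0,\infty)$ be continuously differentiable with $f(t)=\exp_k(g_0(t))$ for all large $t$. Then $f$ satisfies condition (H1) of the context with $q=1$ (with $t_0$ replaced by a suitably large number).
   Context: $\exp_1=\exp$ and $\exp_k(t)=\exp_{k-1}(\exp(t))$. For $f$ positive and $C^2$ on $[t_0,\infty)$ with $g=\log f$ there, condition (H1) means: (i) $g'(t)>0$ and $g''(t)>0$ for all $t\ge t_0$, and there is a pair $(q,p)$ with either $q=1$ and $p\in(0,\infty]$, or $q\in(1,\infty)$ and $p\in(0,\infty)$, such that $\lim_{t\to\infty}\frac{g'(t)^2}{g(t)g''(t)}=q$ and $\lim_{t\to\infty}\frac{tg'(t)}{g(t)}=p$; (ii) if $q=1$, then $tg'(t)/g(t)$ is nondecreasing on $[t_0,\infty)$ and there exist $m\in\mathbb{N}$ and $\hat g\in C^2([t_0,\infty))$ with $f=\exp_m\circ\hat g$ and $\hat g'/\hat g$ nonincreasing on $[t_0,\infty)$. *)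

theory Defs
  imports "HOL-Analysis.Analysis"
begin

definition iter_exp :: "nat \<Rightarrow> real \<Rightarrow> real" where
  "iter_exp k = exp ^^ k"

definition C2_derivs :: "real set \<Rightarrow> (real \<Rightarrow> real) \<Rightarrow> (real \<Rightarrow> real) \<Rightarrow> (real \<Rightarrow> real) \<Rightarrow> bool" where
  "C2_derivs S h h1 h2 \<longleftrightarrow>
     (\<forall>x\<in>S. (h has_real_derivative h1 x) (at x within S) \<and>
             (h1 has_real_derivative h2 x) (at x within S)) \<and>
     continuous_on S h2"

definition H1 :: "(real \<Rightarrow> real) \<Rightarrow> real \<Rightarrow> real \<Rightarrow> ereal \<Rightarrow> bool" where
  "H1 f t0 q p \<longleftrightarrow>
     (\<forall>t\<ge>t0. f t > 0) \<and>
     (\<exists>f1 f2. C2_derivs {t0..} f f1 f2) \<and>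
     (\<exists>g1 g2. C2_derivs {t0..} (\<lambda>t. ln (f t)) g1 g2 \<and>
        (\<forall>t\<ge>t0. g1 t > 0 \<and> g2 t > 0) \<and>
        ((q = 1 \<and> 0 < p) \<or> (q > 1 \<and> 0 < p \<and> p < \<infinity>)) \<and>
        ((\<lambda>t. (g1 t)\<^sup>2 / (ln (f t) * g2 t)) \<longlongrightarrow> q) at_top \<and>
        ((\<lambda>t. ereal (t * g1 t / ln (f t))) \<longlongrightarrow> p) at_top \<and>
        (q = 1 \<longrightarrow>
           (\<forall>s t. t0 \<le> s \<and> s \<le> t \<longrightarrow> s * g1 s / ln (f s) \<le> t * g1 t / ln (f t)) \<and>
           (\<exists>m::nat. m \<ge> 1 \<and>
              (\<exists>h h1 h2. C2_derivs {t0..} h h1 h2 \<and>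
                 (\<forall>t\<ge>t0. f t = iter_exp m (h t)) \<and>
                 (\<forall>s t. t0 \<le> s \<and> s \<le> t \<longrightarrow> h1 t / h t \<le> h1 s / h s)))))"

end

theory Submission
  imports Defs
begin

text \<open>On a tail, \<open>ln f = exp G\<close> with \<open>G = exp\<^sub>k\<^sub>-\<^sub>2 \<circ> g\<^sub>0\<close>. Then
  \<open>(ln f)'\<^sup>2 / (ln f \<cdot> (ln f)'') = G'\<^sup>2 / (G'\<^sup>2 + G'') \<longrightarrow> 1\<close> because \<open>G'' / G'\<^sup>2 \<longrightarrow> 0\<close>,
  and \<open>t (ln f)' / ln f = t G'\<close> increases to \<open>\<infinity>\<close>. It remains to see that the conditions
  \<open>u' > 0\<close>, \<open>t u' \<nearrow> \<infinity>\<close>, \<open>u'' / u'\<^sup>2 \<longrightarrow> 0\<close> pass from \<open>g\<^sub>0\<close> to \<open>G\<close>, i.e. are stable under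
  \<open>u \<mapsto> exp u\<close>: for \<open>exp u\<close> the last ratio is \<open>(1 + u''/u'\<^sup>2) / exp u\<close>, which tends to \<open>0\<close>
  since \<open>t u' \<ge> 1\<close> makes \<open>u - ln t\<close> nondecreasing, hence \<open>u \<longrightarrow> \<infinity>\<close>.\<close>

lemma C2_derivs_cong:
  assumes "\<forall>x\<in>S. f x = g x" "C2_derivs S f f1 f2"
  shows "C2_derivs S g f1 f2"
  using assms unfolding C2_derivs_def has_field_derivative_def
  by (metis has_derivative_transform)

lemma C2_derivs_subset:
  assumes "T \<subseteq> S" "C2_derivs S f f1 f2"
  shows "C2_derivs T f f1 f2"
  using assms unfolding C2_derivs_def
  by (meson DERIV_subset continuous_on_subset subsetD)

lemma C2_derivs_continuous_on:
  assumes "C2_derivs S f f1 f2"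
  shows "continuous_on S f" "continuous_on S f1"
  using assms unfolding C2_derivs_def continuous_on_eq_continuous_within
  by (auto intro: DERIV_continuous)

lemma C2_derivs_exp:
  assumes "C2_derivs S u u1 u2"
  shows "C2_derivs S (\<lambda>t. exp (u t)) (\<lambda>t. exp (u t) * u1 t) (\<lambda>t. exp (u t) * ((u1 t)\<^sup>2 + u2 t))"
  unfolding C2_derivs_def
proof (intro conjI ballI)
  fix x assume "x \<in> S"
  then have d1: "(u has_real_derivative u1 x) (at x within S)"
    and d2: "(u1 has_real_derivative u2 x) (at x within S)"
    using assms unfolding C2_derivs_def by auto
  show "((\<lambda>t. exp (u t)) has_real_derivative exp (u x) * u1 x) (at x within S)"
    using d1 by (auto intro!: derivative_eq_intros)
  show "((\<lambda>t. exp (u t) * u1 t) has_real_derivative exp (u x) * ((u1 x)\<^sup>2 + u2 x)) (at x within S)"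
    using d1 d2 by (auto intro!: derivative_eq_intros simp: power2_eq_square algebra_simps)
next
  have "continuous_on S u" "continuous_on S u1" "continuous_on S u2"
    using C2_derivs_continuous_on[OF assms] assms unfolding C2_derivs_def by auto
  then show "continuous_on S (\<lambda>t. exp (u t) * ((u1 t)\<^sup>2 + u2 t))"
    by (intro continuous_intros)
qed

lemma iter_exp_Suc: "iter_exp (Suc n) x = exp (iter_exp n x)"
  by (simp add: iter_exp_def)

lemma mono_on_atLeast_if_deriv_nonneg:
  fixes u :: "real \<Rightarrow> real"
  assumes deriv: "\<And>x. x \<ge> T \<Longrightarrow> (u has_real_derivative u' x) (at x within {T..})"
    and nonneg: "\<And>x. x \<ge> T \<Longrightarrow> u' x \<ge> 0"
  shows "mono_on {T..} u"
proof (rule mono_onI)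
  fix s t assume "s \<in> {T..}" "t \<in> {T..}" "s \<le> t"
  then have st: "T \<le> s" "s \<le> t" by auto
  show "u s \<le> u t"
  proof (rule DERIV_nonneg_imp_increasing_open[OF st(2)])
    fix x assume "s < x" "x < t"
    then have "x \<in> interior {T..}" using st by (simp add: interior_real_atLeast)
    then have "at x within {T..} = at x" by (rule at_within_interior)
    then show "\<exists>y. (u has_real_derivative y) (at x) \<and> 0 \<le> y"
      using deriv nonneg \<open>s < x\<close> st by (metis order.trans less_imp_le)
  next
    have "continuous_on {T..} u"
      using deriv by (meson DERIV_continuous atLeast_iff continuous_on_eq_continuous_within)
    then show "continuous_on {s..t} u"
      by (rule continuous_on_subset) (use st in auto)
  qed
qed

lemma filterlim_at_top_if_t_deriv_at_top:
  fixes u :: "real \<Rightarrow> real"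
  assumes deriv: "\<And>x. x \<ge> T \<Longrightarrow> (u has_real_derivative u' x) (at x within {T..})"
    and lim: "filterlim (\<lambda>t. t * u' t) at_top at_top"
  shows "filterlim u at_top at_top"
proof -
  obtain T' where T': "\<And>t. t \<ge> T' \<Longrightarrow> t * u' t \<ge> 1"
    using lim unfolding filterlim_at_top eventually_at_top_linorder by blast
  define S where "S = max 1 (max T T')"
  have mono: "mono_on {S..} (\<lambda>t. u t - ln t)"
  proof (rule mono_on_atLeast_if_deriv_nonneg)
    fix x assume x: "x \<ge> S"
    then have "(u has_real_derivative u' x) (at x within {S..})"
      using deriv by (rule_tac DERIV_subset) (auto simp: S_def)
    then show "((\<lambda>t. u t - ln t) has_real_derivative u' x - 1 / x) (at x within {S..})"
      using x by (auto intro!: derivative_eq_intros simp: S_def)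
    have "x * u' x \<ge> 1" "x > 0" using T' x by (auto simp: S_def)
    then show "u' x - 1 / x \<ge> 0" by (simp add: field_simps)
  qed
  have "eventually (\<lambda>t. (u S - ln S) + ln t \<le> u t) at_top"
    using eventually_ge_at_top[of S] by eventually_elim (use mono in \<open>auto dest: mono_onD\<close>)
  then show ?thesis
    by (rule filterlim_at_top_mono[OF filterlim_tendsto_add_at_top[OF tendsto_const ln_at_top]])
qed

definition regular_growth :: "real \<Rightarrow> (real \<Rightarrow> real) \<Rightarrow> (real \<Rightarrow> real) \<Rightarrow> (real \<Rightarrow> real) \<Rightarrow> bool" where
  "regular_growth T u u1 u2 \<longleftrightarrow>
     C2_derivs {T..} u u1 u2 \<and> (\<forall>t\<ge>T. u1 t > 0) \<and>
     filterlim (\<lambda>t. t * u1 t) at_top at_top \<and> ((\<lambda>t. u2 t / (u1 t)\<^sup>2) \<longlongrightarrow> 0) at_top \<and>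
     mono_on {T..} (\<lambda>t. t * u1 t)"

lemma regular_growth_atLeast_mono:
  assumes "regular_growth S u u1 u2" "S \<le> T"
  shows "regular_growth T u u1 u2"
  using assms C2_derivs_subset[of "{T..}" "{S..}"] mono_on_subset[of "{S..}" _ "{T..}"]
  unfolding regular_growth_def by auto

lemma eventually_regular_growth:
  fixes u :: "real \<Rightarrow> real" and t0 :: real
  assumes "C2_derivs {t0..} u u1 u2"
    and "filterlim (\<lambda>t. t * u1 t) at_top at_top"
    and "((\<lambda>t. u2 t / (u1 t)\<^sup>2) \<longlongrightarrow> 0) at_top"
    and "mono_on {t0..} (\<lambda>t. t * u1 t)"
  shows "eventually (\<lambda>T. regular_growth T u u1 u2) at_top"
proof -
  obtain T' where T': "\<And>t. t \<ge> T' \<Longrightarrow> t * u1 t \<ge> 1"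
    using assms(2) unfolding filterlim_at_top eventually_at_top_linorder by blast
  have "regular_growth T u u1 u2" if T: "T \<ge> max 1 (max t0 T')" for T
  proof -
    have "u1 t > 0" if "t \<ge> T" for t
    proof -
      have "t * u1 t \<ge> 1" "t \<ge> 1" using T' T that by auto
      then show ?thesis by (smt (verit) mult_nonneg_nonpos)
    qed
    moreover have "{T..} \<subseteq> {t0..}" using T by auto
    ultimately show ?thesis
      using assms C2_derivs_subset mono_on_subset unfolding regular_growth_def by blast
  qed
  then show ?thesis
    unfolding eventually_at_top_linorder by blast
qed

lemma regular_growth_mono_on_at_top:
  assumes "regular_growth T u u1 u2"
  shows "mono_on {T..} u" "filterlim u at_top at_top"
proof -
  have deriv: "\<And>x. x \<ge> T \<Longrightarrow> (u has_real_derivative u1 x) (at x within {T..})"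
    and "\<And>x. x \<ge> T \<Longrightarrow> u1 x \<ge> 0" and "filterlim (\<lambda>t. t * u1 t) at_top at_top"
    using assms unfolding regular_growth_def C2_derivs_def by (auto simp: less_imp_le)
  then show "mono_on {T..} u" "filterlim u at_top at_top"
    by (auto intro: mono_on_atLeast_if_deriv_nonneg filterlim_at_top_if_t_deriv_at_top)
qed

lemma regular_growth_exp:
  assumes rg: "regular_growth T u u1 u2" and "T \<ge> 0"
  shows "regular_growth T (\<lambda>t. exp (u t)) (\<lambda>t. exp (u t) * u1 t)
           (\<lambda>t. exp (u t) * ((u1 t)\<^sup>2 + u2 t))"
proof -
  have C2: "C2_derivs {T..} u u1 u2" and pos: "\<And>t. t \<ge> T \<Longrightarrow> u1 t > 0"
    and lim: "filterlim (\<lambda>t. t * u1 t) at_top at_top"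
    and ratio: "((\<lambda>t. u2 t / (u1 t)\<^sup>2) \<longlongrightarrow> 0) at_top"
    and mono: "mono_on {T..} (\<lambda>t. t * u1 t)"
    using rg unfolding regular_growth_def by auto
  have u_mono: "mono_on {T..} u" and u_lim: "filterlim u at_top at_top"
    using regular_growth_mono_on_at_top[OF rg] by auto
  have exp_u_lim: "filterlim (\<lambda>t. exp (u t)) at_top at_top"
    using filterlim_compose[OF exp_at_top u_lim] .
  have "filterlim (\<lambda>t. t * (exp (u t) * u1 t)) at_top at_top"
  proof (rule filterlim_at_top_mono[OF lim])
    show "eventually (\<lambda>t. t * u1 t \<le> t * (exp (u t) * u1 t)) at_top"
      using eventually_ge_at_top[of T] filterlim_at_top[THEN iffD1, OF u_lim, rule_format, of 0]
    proof eventually_elim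
      case (elim t)
      then have "1 * (t * u1 t) \<le> exp (u t) * (t * u1 t)"
        using pos[of t] \<open>T \<ge> 0\<close> by (intro mult_right_mono) auto
      then show ?case by (simp add: algebra_simps)
    qed
  qed
  moreover have "((\<lambda>t. exp (u t) * ((u1 t)\<^sup>2 + u2 t) / (exp (u t) * u1 t)\<^sup>2) \<longlongrightarrow> 0) at_top"
  proof (rule Lim_transform_eventually)
    show "((\<lambda>t. (1 + u2 t / (u1 t)\<^sup>2) / exp (u t)) \<longlongrightarrow> 0) at_top"
      using tendsto_add[OF tendsto_const ratio, of 1] exp_u_lim
      by (rule tendsto_divide_0[OF _ filterlim_at_top_imp_at_infinity])
    show "eventually (\<lambda>t. (1 + u2 t / (u1 t)\<^sup>2) / exp (u t) =
        exp (u t) * ((u1 t)\<^sup>2 + u2 t) / (exp (u t) * u1 t)\<^sup>2) at_top"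
      using eventually_ge_at_top[of T]
    proof eventually_elim
      case (elim t)
      then have "u1 t \<noteq> 0" using pos[of t] by simp
      then show ?case by (simp add: field_simps power2_eq_square)
    qed
  qed
  moreover have "mono_on {T..} (\<lambda>t. t * (exp (u t) * u1 t))"
  proof (rule mono_onI)
    fix s t assume "s \<in> {T..}" "t \<in> {T..}" "s \<le> t"
    then have "exp (u s) \<le> exp (u t)" "s * u1 s \<le> t * u1 t" "0 \<le> s * u1 s"
      using pos[of s] \<open>T \<ge> 0\<close> mono_onD[OF u_mono] mono_onD[OF mono] by auto
    then have "exp (u s) * (s * u1 s) \<le> exp (u t) * (t * u1 t)"
      by (meson exp_ge_zero mult_mono)
    then show "s * (exp (u s) * u1 s) \<le> t * (exp (u t) * u1 t)"
      by (simp add: algebra_simps)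
  qed
  ultimately show ?thesis
    using C2_derivs_exp[OF C2] pos unfolding regular_growth_def by auto
qed

lemma regular_growth_iter_exp:
  assumes "regular_growth T u u1 u2" "T \<ge> 0"
  shows "\<exists>v1 v2. regular_growth T (\<lambda>t. iter_exp n (u t)) v1 v2"
proof (induction n)
  case 0
  then show ?case using assms by (auto simp: iter_exp_def)
next
  case (Suc n)
  then obtain v1 v2 where "regular_growth T (\<lambda>t. iter_exp n (u t)) v1 v2" by blast
  from regular_growth_exp[OF this assms(2)] show ?case by (auto simp: iter_exp_Suc)
qed

lemma regular_growth_eventually_exp_convex:
  assumes "regular_growth T u u1 u2"
  shows "eventually (\<lambda>t. (u1 t)\<^sup>2 + u2 t > 0) at_top"
proof -
  have "eventually (\<lambda>t. u2 t / (u1 t)\<^sup>2 > -1) at_top"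
    using assms unfolding regular_growth_def by (auto intro: order_tendstoD)
  with eventually_ge_at_top[of T] show ?thesis
  proof eventually_elim
    case (elim t)
    then have "(u1 t)\<^sup>2 > 0" using assms unfolding regular_growth_def by auto
    with elim show ?case by (simp add: field_simps)
  qed
qed

lemma regular_growth_exp_ratio_tendsto_1:
  assumes "regular_growth T G G1 G2"
  shows "((\<lambda>t. (exp (G t) * G1 t)\<^sup>2 / (exp (G t) * (exp (G t) * ((G1 t)\<^sup>2 + G2 t))))
           \<longlongrightarrow> 1) at_top"
proof (rule Lim_transform_eventually)
  show "((\<lambda>t. inverse (1 + G2 t / (G1 t)\<^sup>2)) \<longlongrightarrow> 1) at_top"
  proof -
    have "((\<lambda>t. G2 t / (G1 t)\<^sup>2) \<longlongrightarrow> 0) at_top"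
      using assms unfolding regular_growth_def by blast
    from tendsto_inverse[OF tendsto_add[OF tendsto_const this, of 1]] show ?thesis
      by simp
  qed
  show "eventually (\<lambda>t. inverse (1 + G2 t / (G1 t)\<^sup>2) =
      (exp (G t) * G1 t)\<^sup>2 / (exp (G t) * (exp (G t) * ((G1 t)\<^sup>2 + G2 t)))) at_top"
    using eventually_ge_at_top[of T]
  proof eventually_elim
    case (elim t)
    then have "G1 t \<noteq> 0" using assms unfolding regular_growth_def by auto
    have "(exp (G t) * G1 t)\<^sup>2 / (exp (G t) * (exp (G t) * ((G1 t)\<^sup>2 + G2 t))) =
        (exp (G t))\<^sup>2 * (G1 t)\<^sup>2 / ((exp (G t))\<^sup>2 * ((G1 t)\<^sup>2 + G2 t))"
      by (simp add: power2_eq_square)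
    also have "\<dots> = (G1 t)\<^sup>2 / ((G1 t)\<^sup>2 + G2 t)"
      by simp
    also have "\<dots> = inverse (1 + G2 t / (G1 t)\<^sup>2)"
      using \<open>G1 t \<noteq> 0\<close> by (simp add: field_simps)
    finally show ?case ..
  qed
qed

lemma H1_exp_exp:
  assumes rg: "regular_growth T G G1 G2"
    and f_eq: "\<forall>t\<ge>T. f t = exp (exp (G t))"
    and convex: "\<forall>t\<ge>T. (G1 t)\<^sup>2 + G2 t > 0"
    and h: "m \<ge> 1" "C2_derivs {T..} h h1 h2" "\<forall>t\<ge>T. f t = iter_exp m (h t)"
      "\<forall>s t. T \<le> s \<and> s \<le> t \<longrightarrow> h1 t / h t \<le> h1 s / h s"
  shows "H1 f T 1 \<infinity>"
proof -
  define g1 where "g1 = (\<lambda>t. exp (G t) * G1 t)"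
  define g2 where "g2 = (\<lambda>t. exp (G t) * ((G1 t)\<^sup>2 + G2 t))"
  have C2: "C2_derivs {T..} G G1 G2" and G1_pos: "\<forall>t\<ge>T. G1 t > 0"
    and lim: "filterlim (\<lambda>t. t * G1 t) at_top at_top"
    and mono: "mono_on {T..} (\<lambda>t. t * G1 t)"
    using rg unfolding regular_growth_def by auto
  have ln_f: "ln (f t) = exp (G t)" if "t \<ge> T" for t
    using f_eq that by simp
  have t_log_deriv: "t * g1 t / ln (f t) = t * G1 t" if "t \<ge> T" for t
    using ln_f[OF that] by (simp add: g1_def)
  have C2_exp_G: "C2_derivs {T..} (\<lambda>t. exp (G t)) g1 g2"
    unfolding g1_def g2_def by (rule C2_derivs_exp[OF C2])
  show ?thesis
    unfolding H1_def
  proof (intro conjI exI impI)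
    show "\<forall>t\<ge>T. f t > 0"
      using f_eq by simp
    show "C2_derivs {T..} f (\<lambda>t. exp (exp (G t)) * g1 t) (\<lambda>t. exp (exp (G t)) * ((g1 t)\<^sup>2 + g2 t))"
      using C2_derivs_exp[OF C2_exp_G] by (rule C2_derivs_cong[rotated]) (simp add: f_eq)
    show "C2_derivs {T..} (\<lambda>t. ln (f t)) g1 g2"
      using C2_exp_G by (rule C2_derivs_cong[rotated]) (simp add: ln_f)
    show "\<forall>t\<ge>T. g1 t > 0 \<and> g2 t > 0"
      using G1_pos convex by (simp add: g1_def g2_def)
    show "(1::real) = 1 \<and> 0 < (\<infinity>::ereal) \<or> 1 < (1::real) \<and> 0 < (\<infinity>::ereal) \<and> \<infinity> < (\<infinity>::ereal)"
      by simp
    have "eventually (\<lambda>t. (exp (G t) * G1 t)\<^sup>2 / (exp (G t) * (exp (G t) * ((G1 t)\<^sup>2 + G2 t))) =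
        (g1 t)\<^sup>2 / (ln (f t) * g2 t)) at_top"
      using eventually_ge_at_top[of T] by eventually_elim (simp add: ln_f g1_def g2_def)
    with regular_growth_exp_ratio_tendsto_1[OF rg]
    show "((\<lambda>t. (g1 t)\<^sup>2 / (ln (f t) * g2 t)) \<longlongrightarrow> 1) at_top"
      by (rule Lim_transform_eventually)
    have "eventually (\<lambda>t. t * G1 t = t * g1 t / ln (f t)) at_top"
      using eventually_ge_at_top[of T] by eventually_elim (simp add: t_log_deriv)
    then show "((\<lambda>t. ereal (t * g1 t / ln (f t))) \<longlongrightarrow> \<infinity>) at_top"
      unfolding tendsto_PInfty_eq_at_top using lim by (simp only: filterlim_cong[OF refl refl])
    show "\<forall>s t. T \<le> s \<and> s \<le> t \<longrightarrow> s * g1 s / ln (f s) \<le> t * g1 t / ln (f t)"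
      using mono_onD[OF mono] by (simp add: t_log_deriv)
    show "m \<ge> 1" "C2_derivs {T..} h h1 h2" "\<forall>t\<ge>T. f t = iter_exp m (h t)"
      "\<forall>s t. T \<le> s \<and> s \<le> t \<longrightarrow> h1 t / h t \<le> h1 s / h s"
      by (fact h)+
  qed
qed

theorem lemma2p11:
  fixes k :: nat and t0 :: real
    and g0 g0' g0'' :: "real \<Rightarrow> real" and f :: "real \<Rightarrow> real"
  assumes "k \<ge> 2" and "t0 \<ge> 0"
    and "C2_derivs {t0..} g0 g0' g0''"
    and "filterlim (\<lambda>t. t * g0' t) at_top at_top"
    and "((\<lambda>t. g0'' t / (g0' t)\<^sup>2) \<longlongrightarrow> 0) at_top"
    and "\<forall>s t. t0 \<le> s \<and> s \<le> t \<longrightarrow> s * g0' s \<le> t * g0' t"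
    and "\<forall>s t. t0 \<le> s \<and> s \<le> t \<longrightarrow> g0' t / g0 t \<le> g0' s / g0 s"
    and "\<forall>t\<ge>0. f t \<ge> 0"
    and "\<exists>f'. (\<forall>t\<ge>0. (f has_real_derivative f' t) (at t within {0..})) \<and> continuous_on {0..} f'"
    and "eventually (\<lambda>t. f t = iter_exp k (g0 t)) at_top"
  shows "\<exists>T p. H1 f T 1 p"
proof -
  have "mono_on {t0..} (\<lambda>t. t * g0' t)"
    using assms(6) by (auto intro: mono_onI)
  with assms(3-5) have "eventually (\<lambda>T. regular_growth T g0 g0' g0'') at_top"
    by (rule eventually_regular_growth)
  then obtain T0 where "T0 \<ge> t0" and g0_rg: "regular_growth T0 g0 g0' g0''"
    unfolding eventually_at_top_linorder by (meson max.cobounded1 max.cobounded2)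
  obtain m where k: "k = Suc (Suc m)"
    using assms(1) by (metis add_2_eq_Suc le_Suc_ex)
  define G where "G = (\<lambda>t. iter_exp m (g0 t))"
  obtain G1 G2 where G_rg: "regular_growth T0 G G1 G2"
    using regular_growth_iter_exp[OF g0_rg, of m] \<open>T0 \<ge> t0\<close> assms(2) unfolding G_def by auto
  have "eventually (\<lambda>t. t \<ge> T0 \<and> (G1 t)\<^sup>2 + G2 t > 0 \<and> f t = iter_exp k (g0 t)) at_top"
    using eventually_ge_at_top regular_growth_eventually_exp_convex[OF G_rg] assms(10)
    by eventually_elim auto
  then obtain T where T: "\<forall>t\<ge>T. t \<ge> T0 \<and> (G1 t)\<^sup>2 + G2 t > 0 \<and> f t = iter_exp k (g0 t)"
    unfolding eventually_at_top_linorder by blast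
  then have "T \<ge> T0" by auto
  have "H1 f T 1 \<infinity>"
  proof (rule H1_exp_exp[where m = k and h = g0])
    show "regular_growth T G G1 G2"
      using regular_growth_atLeast_mono[OF G_rg \<open>T \<ge> T0\<close>] .
    show "\<forall>t\<ge>T. f t = exp (exp (G t))"
      using T by (simp add: k G_def iter_exp_Suc)
    show "C2_derivs {T..} g0 g0' g0''"
      using assms(3) by (rule C2_derivs_subset[rotated]) (use \<open>T \<ge> T0\<close> \<open>T0 \<ge> t0\<close> in auto)
    show "\<forall>s t. T \<le> s \<and> s \<le> t \<longrightarrow> g0' t / g0 t \<le> g0' s / g0 s"
      using assms(7) \<open>T \<ge> T0\<close> \<open>T0 \<ge> t0\<close> by auto
  qed (use T assms(1) in auto)
  then show ?thesis by blast
qed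

end
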